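(* Let $s$ satisfy (s1)–(s2). Suppose $p$ is a measurable function on $\Omega$ with $p\le M$ for some finite $M$, and $\rho(x)\in\partial s^*(p(x),x)$ for a.e. $x\in\Omega$. Then $\rho\in L^\infty(\Omega)$ and $\rho p\in L^\infty(\Omega)$, and both bounds depend only on $s$ and $M$.
   Context: $\Omega\subset\mathbb{R}^d$ bounded smooth domain. $s:\mathbb{R}\times\Omega\to\mathbb{R}\cup\{+\infty\}$ with: (s1) $s(\cdot,x)$ proper, lower semicontinuous, convex for every $x$; (s2) $s(z,x)=+\infty$ for $z<0$, $s(0,x)=0$, $\inf_{(z,x)}s(z,x)>-\infty$, and $\lim_{z\to\infty}\inf_{x\in\Omega}s(z,x)/z=+\infty$. $s^*(p,x)=\sup_{z\in\mathbb{R}}(pz-s(z,x))$ and $\partial s^*(p,x)$ is its subdifferential in $p$. *)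

theory Defs
  imports "HOL-Analysis.Analysis"
begin

definition proper_fun :: "(real \<Rightarrow> ereal) \<Rightarrow> bool" where
  "proper_fun f \<longleftrightarrow> (\<exists>z. f z < \<infinity>) \<and> (\<forall>z. f z > -\<infinity>)"

definition lsc_fun :: "(real \<Rightarrow> ereal) \<Rightarrow> bool" where
  "lsc_fun f \<longleftrightarrow> (\<forall>z. f z \<le> Liminf (at z) f)"

definition convex_ext :: "(real \<Rightarrow> ereal) \<Rightarrow> bool" where
  "convex_ext f \<longleftrightarrow> (\<forall>z w t. 0 \<le> t \<and> t \<le> 1 \<longrightarrow>
      f (t * z + (1 - t) * w) \<le> ereal t * f z + ereal (1 - t) * f w)"

definition s_assumptions :: "(real \<Rightarrow> 'a \<Rightarrow> ereal) \<Rightarrow> 'a set \<Rightarrow> bool" where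
  "s_assumptions s \<Omega> \<longleftrightarrow>
     (\<forall>x\<in>\<Omega>. proper_fun (\<lambda>z. s z x) \<and> lsc_fun (\<lambda>z. s z x) \<and> convex_ext (\<lambda>z. s z x)) \<and>
     (\<forall>x\<in>\<Omega>. \<forall>z<0. s z x = \<infinity>) \<and>
     (\<forall>x\<in>\<Omega>. s 0 x = 0) \<and>
     (INF zx\<in>UNIV \<times> \<Omega>. s (fst zx) (snd zx)) > -\<infinity> \<and>
     ((\<lambda>z. (INF x\<in>\<Omega>. s z x) / ereal z) \<longlongrightarrow> \<infinity>) at_top"

definition conj_s :: "(real \<Rightarrow> 'a \<Rightarrow> ereal) \<Rightarrow> real \<Rightarrow> 'a \<Rightarrow> ereal" where
  "conj_s s p x = (SUP z. ereal (p * z) - s z x)"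

definition subdiff_conj :: "(real \<Rightarrow> 'a \<Rightarrow> ereal) \<Rightarrow> real \<Rightarrow> 'a \<Rightarrow> real set" where
  "subdiff_conj s p x =
     {r. \<forall>q. conj_s s q x \<ge> conj_s s p x + ereal (r * (q - p))}"

end

theory Submission
  imports Defs
begin

text \<open>
  Write \<open>\<partial>s\<^sup>*\<close> for \<open>subdiff_conj s\<close>. If \<open>\<rho> \<in> \<partial>s\<^sup>*(p)\<close>, the subgradient inequality
  \<open>s\<^sup>*(q) \<ge> s\<^sup>*(p) + \<rho> (q - p)\<close> together with \<open>s\<^sup>*(p) \<ge> -s(0) = 0\<close> gives
  \<open>\<rho> (q - p) \<le> s\<^sup>*(q)\<close> for every \<open>q\<close>, so upper bounds on \<open>s\<^sup>*\<close> become bounds on \<open>\<rho>\<close>.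
  Since \<open>s = \<infinity>\<close> on negative arguments and \<open>s \<ge> -B\<close>, the conjugate is at most \<open>B\<close> on
  \<open>q \<le> 0\<close>; letting \<open>q \<rightarrow> -\<infinity>\<close> gives \<open>\<rho> \<ge> 0\<close>, and \<open>q = 0\<close> gives \<open>\<rho> p \<ge> -B\<close>.
  Superlinearity gives \<open>Z\<close> with \<open>s(z) \<ge> (M + 1) z\<close> for \<open>z \<ge> Z\<close>, uniformly in \<open>x\<close>, hence
  \<open>s\<^sup>* \<le> |M + 1| Z + B\<close> on \<open>q \<le> M + 1\<close>; taking \<open>q = p + 1\<close> bounds \<open>\<rho>\<close>, and then
  \<open>\<rho> p \<le> \<rho> M\<close> bounds \<open>\<rho> p\<close> from above. All bounds hold pointwise.
\<close>

lemma conj_s_nonneg: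
  assumes "s 0 x = 0"
  shows "0 \<le> conj_s s p x"
proof -
  have "ereal (p * 0) - s 0 x \<le> conj_s s p x"
    unfolding conj_s_def by (rule SUP_upper) simp
  then show ?thesis using assms by (simp add: zero_ereal_def)
qed

lemma conj_s_le_of_nonpos:
  assumes "\<forall>z<0. s z x = \<infinity>" and "\<forall>z. ereal (-B) \<le> s z x" and "q \<le> 0"
  shows "conj_s s q x \<le> ereal B"
  unfolding conj_s_def
proof (rule SUP_least)
  fix z :: real
  show "ereal (q * z) - s z x \<le> ereal B"
  proof (cases "z < 0")
    case True
    then show ?thesis using assms(1) by simp
  next
    case False
    then have "q * z \<le> 0" using \<open>q \<le> 0\<close> by (simp add: mult_nonpos_nonneg)
    moreover have "ereal (-B) \<le> s z x" using assms(2) by blast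
    ultimately show ?thesis by (cases "s z x") auto
  qed
qed

lemma conj_s_le_of_linear_minorant:
  assumes "\<forall>z<0. s z x = \<infinity>" and "\<forall>z. ereal (-B) \<le> s z x"
    and "\<forall>z\<ge>Z. ereal (a * z) \<le> s z x" and "0 \<le> Z" and "0 \<le> B" and "q \<le> a"
  shows "conj_s s q x \<le> ereal (\<bar>a\<bar> * Z + B)"
  unfolding conj_s_def
proof (rule SUP_least)
  fix z :: real
  show "ereal (q * z) - s z x \<le> ereal (\<bar>a\<bar> * Z + B)"
  proof (cases "z < 0")
    case True
    then show ?thesis using assms(1) by simp
  next
    case False
    then have qz: "q * z \<le> a * z" using \<open>q \<le> a\<close> by (simp add: mult_right_mono)
    show ?thesis
    proof (cases "z \<le> Z")
      case True
      have "a * z \<le> \<bar>a\<bar> * Z"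
        using True False by (metis abs_ge_self abs_ge_zero mult_mono not_le order_trans)
      moreover have "ereal (-B) \<le> s z x" using assms(2) by blast
      ultimately show ?thesis using qz by (cases "s z x") auto
    next
      case False
      then have "ereal (a * z) \<le> s z x" using assms(3) by simp
      moreover have "0 \<le> \<bar>a\<bar> * Z + B" using assms(4,5) by simp
      ultimately show ?thesis using qz by (cases "s z x") auto
    qed
  qed
qed

lemma subdiff_conj_slope_le:
  assumes "s 0 x = 0" and "\<rho> \<in> subdiff_conj s p x" and "conj_s s q x \<le> ereal c"
  shows "\<rho> * (q - p) \<le> c"
proof -
  have "conj_s s p x + ereal (\<rho> * (q - p)) \<le> conj_s s q x"
    using assms(2) unfolding subdiff_conj_def by blast
  moreover have "0 \<le> conj_s s p x" using assms(1) by (rule conj_s_nonneg)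
  ultimately show ?thesis using assms(3) by (cases "conj_s s p x"; cases "conj_s s q x") auto
qed

lemma nonneg_if_bounded_above_on_left_half_line:
  fixes \<rho> p B :: real
  assumes "\<And>q. q \<le> 0 \<Longrightarrow> \<rho> * (q - p) \<le> B"
  shows "0 \<le> \<rho>"
proof (rule ccontr)
  assume "\<not> 0 \<le> \<rho>"
  then have "\<rho> < 0" by simp
  define q where "q = min 0 (p + (B + 1) / \<rho>)"
  have "\<rho> * ((B + 1) / \<rho>) \<le> \<rho> * (q - p)"
    using \<open>\<rho> < 0\<close> by (intro mult_left_mono_neg) (auto simp: q_def)
  then have "B + 1 \<le> \<rho> * (q - p)" using \<open>\<rho> < 0\<close> by simp
  moreover have "\<rho> * (q - p) \<le> B" by (rule assms) (simp add: q_def)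
  ultimately show False by simp
qed

lemma subdiff_conj_bounds:
  assumes "s 0 x = 0" and "\<forall>z<0. s z x = \<infinity>" and "\<forall>z. ereal (-B) \<le> s z x"
    and "\<forall>z\<ge>Z. ereal ((M + 1) * z) \<le> s z x" and "0 \<le> Z" and "0 \<le> B"
    and "p \<le> M" and "\<rho> \<in> subdiff_conj s p x"
  shows "\<bar>\<rho>\<bar> \<le> \<bar>M + 1\<bar> * Z + B"
    and "\<bar>\<rho> * p\<bar> \<le> max B ((\<bar>M + 1\<bar> * Z + B) * \<bar>M\<bar>)"
proof -
  define K where "K = \<bar>M + 1\<bar> * Z + B"
  have left: "\<rho> * (q - p) \<le> B" if "q \<le> 0" for q
    using assms(1,8) conj_s_le_of_nonpos[of s x B q, OF assms(2,3) that]
    by (rule subdiff_conj_slope_le)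
  have "0 \<le> \<rho>" using left by (rule nonneg_if_bounded_above_on_left_half_line)
  have "conj_s s (p + 1) x \<le> ereal K"
    unfolding K_def using assms(2-7) by (intro conj_s_le_of_linear_minorant) auto
  then have "\<rho> \<le> K" using subdiff_conj_slope_le[OF assms(1,8)] by fastforce
  then show "\<bar>\<rho>\<bar> \<le> K" using \<open>0 \<le> \<rho>\<close> by simp
  have "\<rho> * p \<le> \<rho> * \<bar>M\<bar>" using \<open>0 \<le> \<rho>\<close> \<open>p \<le> M\<close> by (intro mult_left_mono) auto
  also have "\<dots> \<le> K * \<bar>M\<bar>" using \<open>\<rho> \<le> K\<close> by (intro mult_right_mono) auto
  finally have "\<rho> * p \<le> K * \<bar>M\<bar>" .
  moreover have "-B \<le> \<rho> * p" using left[of 0] by simp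
  ultimately show "\<bar>\<rho> * p\<bar> \<le> max B (K * \<bar>M\<bar>)" by linarith
qed

lemma superlinear_above_linear:
  fixes g :: "real \<Rightarrow> ereal"
  assumes "((\<lambda>z. g z / ereal z) \<longlongrightarrow> \<infinity>) at_top"
  obtains Z where "0 \<le> Z" and "\<forall>z\<ge>Z. ereal (a * z) \<le> g z"
proof -
  have "eventually (\<lambda>z. ereal a < g z / ereal z) at_top"
    using order_tendstoD(1)[OF assms] by simp
  then obtain N where N: "\<And>z. N \<le> z \<Longrightarrow> ereal a < g z / ereal z"
    unfolding eventually_at_top_linorder by blast
  have "ereal (a * z) \<le> g z" if "max N 1 \<le> z" for z
  proof -
    have "0 < z" and "ereal a < g z / ereal z" using that N by auto
    then show ?thesis by (cases "g z") (auto simp: less_divide_eq mult.commute)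
  qed
  then show ?thesis using that[of "max N 1"] by simp
qed

lemma s_assumptions_uniform_lower_bound:
  assumes "s_assumptions s \<Omega>"
  obtains B where "0 \<le> B" and "\<forall>x\<in>\<Omega>. \<forall>z. ereal (-B) \<le> s z x"
proof -
  let ?m = "INF zx\<in>UNIV \<times> \<Omega>. s (fst zx) (snd zx)"
  have "?m > -\<infinity>" using assms unfolding s_assumptions_def by blast
  then obtain B where "0 \<le> B" and B: "ereal (-B) \<le> ?m"
  proof (cases ?m)
    case (real r)
    then show ?thesis using that[of "max 0 (-r)"] by simp
  qed (use that[of 0] in auto)
  have "ereal (-B) \<le> s z x" if "x \<in> \<Omega>" for z x
  proof -
    have "?m \<le> s (fst (z, x)) (snd (z, x))" by (rule INF_lower) (simp add: that)
    with B show ?thesis by simp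
  qed
  with \<open>0 \<le> B\<close> show ?thesis using that by blast
qed

lemma s_assumptions_above_linear:
  assumes "s_assumptions s \<Omega>"
  obtains Z where "0 \<le> Z" and "\<forall>x\<in>\<Omega>. \<forall>z\<ge>Z. ereal (a * z) \<le> s z x"
proof -
  have "((\<lambda>z. (INF x\<in>\<Omega>. s z x) / ereal z) \<longlongrightarrow> \<infinity>) at_top"
    using assms unfolding s_assumptions_def by blast
  then obtain Z where "0 \<le> Z" and Z: "\<forall>z\<ge>Z. ereal (a * z) \<le> (INF x\<in>\<Omega>. s z x)"
    by (rule superlinear_above_linear)
  have "ereal (a * z) \<le> s z x" if "x \<in> \<Omega>" and "Z \<le> z" for x z
    using Z INF_lower[OF \<open>x \<in> \<Omega>\<close>, of "s z"] \<open>Z \<le> z\<close> by (blast intro: order_trans)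
  with \<open>0 \<le> Z\<close> show ?thesis using that by blast
qed

theorem lemma2p14:
  fixes s :: "real \<Rightarrow> 'a::euclidean_space \<Rightarrow> ereal" and \<Omega> :: "'a set" and M :: real
  assumes "open \<Omega>" and "bounded \<Omega>" and "connected \<Omega>"
    and "s_assumptions s \<Omega>"
  shows "\<exists>C::real. \<forall>p \<rho> :: 'a \<Rightarrow> real.
           p \<in> borel_measurable (lebesgue_on \<Omega>) \<longrightarrow>
           \<rho> \<in> borel_measurable (lebesgue_on \<Omega>) \<longrightarrow>
           (AE x in lebesgue_on \<Omega>. p x \<le> M) \<longrightarrow>
           (AE x in lebesgue_on \<Omega>. \<rho> x \<in> subdiff_conj s (p x) x) \<longrightarrow>
           (AE x in lebesgue_on \<Omega>. \<bar>\<rho> x\<bar> \<le> C) \<and>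
           (AE x in lebesgue_on \<Omega>. \<bar>\<rho> x * p x\<bar> \<le> C)"
proof -
  obtain B where "0 \<le> B" and lower: "\<forall>x\<in>\<Omega>. \<forall>z. ereal (-B) \<le> s z x"
    using assms(4) by (rule s_assumptions_uniform_lower_bound)
  obtain Z where "0 \<le> Z" and linear: "\<forall>x\<in>\<Omega>. \<forall>z\<ge>Z. ereal ((M + 1) * z) \<le> s z x"
    using assms(4) by (rule s_assumptions_above_linear)
  have s0: "\<forall>x\<in>\<Omega>. s 0 x = 0" and neg: "\<forall>x\<in>\<Omega>. \<forall>z<0. s z x = \<infinity>"
    using assms(4) unfolding s_assumptions_def by blast+
  define K where "K = \<bar>M + 1\<bar> * Z + B"
  have bounds: "\<bar>\<rho>\<bar> \<le> K \<and> \<bar>\<rho> * p\<bar> \<le> max B (K * \<bar>M\<bar>)"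
    if "x \<in> \<Omega>" and "p \<le> M" and "\<rho> \<in> subdiff_conj s p x" for x p \<rho>
    using subdiff_conj_bounds[of s x B Z M p \<rho>] that s0 neg lower linear \<open>0 \<le> B\<close> \<open>0 \<le> Z\<close>
    unfolding K_def by simp
  show ?thesis
  proof (intro exI[of _ "max K (max B (K * \<bar>M\<bar>))"] allI impI)
    fix p \<rho> :: "'a \<Rightarrow> real"
    assume "AE x in lebesgue_on \<Omega>. p x \<le> M"
      and "AE x in lebesgue_on \<Omega>. \<rho> x \<in> subdiff_conj s (p x) x"
    moreover have "AE x in lebesgue_on \<Omega>. x \<in> \<Omega>" by (rule AE_I2) simp
    ultimately have "AE x in lebesgue_on \<Omega>. \<bar>\<rho> x\<bar> \<le> K \<and> \<bar>\<rho> x * p x\<bar> \<le> max B (K * \<bar>M\<bar>)"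
      by eventually_elim (use bounds in blast)
    then show "(AE x in lebesgue_on \<Omega>. \<bar>\<rho> x\<bar> \<le> max K (max B (K * \<bar>M\<bar>))) \<and>
        (AE x in lebesgue_on \<Omega>. \<bar>\<rho> x * p x\<bar> \<le> max K (max B (K * \<bar>M\<bar>)))"
      by (auto elim: AE_mp)
  qed
qed

end
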